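(* Let $\alpha=(n_1,m_1,\dots,n_p,m_p)\in\mathbb Z_{\ge0}^{2p}$ and $a=(a_{hk})\in I(\alpha)$. Then for all $i,j=1,\dots,p$, $$a_{ip}=n_i-\sum_{k=1}^{p-1}a_{ik},\qquad a_{pj}=m_j-\sum_{h=1}^{p-1}a_{hj},\qquad a_{pp}=n_p-\sum_{k=1}^{p-1}m_k+\sum_{h,k=1}^{p-1}a_{hk}.$$
   Context: $I(\alpha)$ is the set of $a=(a_{11},\dots,a_{1p},a_{21},\dots,a_{pp})\in\mathbb Z_{\ge0}^{p^2}$ with $l_{ij}(\alpha,a)\le a_{ij}\le L_{ij}(\alpha,a)$ for all $i,j=1,\dots,p$, where $$l_{ij}(\alpha,a)=\max\Big(0,\ \sum_{h=1}^i n_h-\sum_{h=j+1}^p m_h-\sum_{\substack{h\le i,\,k\le j\\ (h,k)\neq(i,j)}}a_{hk}\Big),\qquad L_{ij}(\alpha,a)=\min\Big(n_i-\sum_{h=1}^{j-1}a_{ih},\ m_j-\sum_{h=1}^{i-1}a_{hj}\Big).$$ (The paper writes $\wedge$ for this max and $\vee$ for this min.) *)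

theory Defs
  imports Main
begin

text \<open>alpha = (n_1,m_1,...,n_p,m_p) is encoded by p and two functions n m :: nat => nat,
  of which only the values at 1..p matter. A vector a in Z_{>=0}^{p^2} is encoded as a
  function a :: nat => nat => nat with a h k = a_{hk}, vanishing outside {1..p} x {1..p}.\<close>

definition low_bd :: "nat \<Rightarrow> (nat \<Rightarrow> nat) \<Rightarrow> (nat \<Rightarrow> nat) \<Rightarrow> (nat \<Rightarrow> nat \<Rightarrow> nat) \<Rightarrow> nat \<Rightarrow> nat \<Rightarrow> int" where
  "low_bd p n m a i j =
     max 0 ((\<Sum>h=1..i. int (n h)) - (\<Sum>h=j+1..p. int (m h))
            - (\<Sum>(h,k)\<in>({1..i} \<times> {1..j}) - {(i,j)}. int (a h k)))"

definition up_bd :: "nat \<Rightarrow> (nat \<Rightarrow> nat) \<Rightarrow> (nat \<Rightarrow> nat) \<Rightarrow> (nat \<Rightarrow> nat \<Rightarrow> nat) \<Rightarrow> nat \<Rightarrow> nat \<Rightarrow> int" where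
  "up_bd p n m a i j =
     min (int (n i) - (\<Sum>h=1..j-1. int (a i h))) (int (m j) - (\<Sum>h=1..i-1. int (a h j)))"

definition I_set :: "nat \<Rightarrow> (nat \<Rightarrow> nat) \<Rightarrow> (nat \<Rightarrow> nat) \<Rightarrow> (nat \<Rightarrow> nat \<Rightarrow> nat) set" where
  "I_set p n m = {a. (\<forall>i j. (i \<notin> {1..p} \<or> j \<notin> {1..p}) \<longrightarrow> a i j = 0) \<and>
     (\<forall>i\<in>{1..p}. \<forall>j\<in>{1..p}. low_bd p n m a i j \<le> int (a i j) \<and> int (a i j) \<le> up_bd p n m a i j)}"

end

theory Submission
  imports Defs
begin

text \<open>The lower bound at \<open>(p, p)\<close> says that the total mass of \<open>a\<close> is at least
  \<open>\<Sum> n\<^sub>h = \<Sum> m\<^sub>k\<close>, while the upper bounds at \<open>(i, p)\<close> and \<open>(p, j)\<close> say that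
  the \<open>i\<close>-th row sum is at most \<open>n\<^sub>i\<close> and the \<open>j\<close>-th column sum at most \<open>m\<^sub>j\<close>.
  Hence all these inequalities are equalities: \<open>a\<close> has row sums \<open>n\<close> and column
  sums \<open>m\<close>, and the three identities are obtained by solving for the last entries.\<close>

lemma sum_atLeast1_atMost_last:
  fixes f :: "nat \<Rightarrow> 'a::comm_monoid_add"
  assumes "p \<ge> 1"
  shows "(\<Sum>k=1..p. f k) = (\<Sum>k=1..p-1. f k) + f p"
  using assms by (cases p) auto

lemma sum_rectangle_minus_corner:
  fixes f :: "nat \<Rightarrow> nat \<Rightarrow> 'a::ab_group_add"
  assumes "i \<ge> 1" and "j \<ge> 1"
  shows "(\<Sum>(h,k)\<in>({1..i} \<times> {1..j}) - {(i,j)}. f h k)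
       = (\<Sum>h=1..i. \<Sum>k=1..j. f h k) - f i j"
proof -
  have "(\<Sum>(h,k)\<in>({1..i} \<times> {1..j}) - {(i,j)}. f h k)
      = (\<Sum>(h,k)\<in>{1..i} \<times> {1..j}. f h k) - f i j"
    using assms by (subst sum_diff1) auto
  also have "(\<Sum>(h,k)\<in>{1..i} \<times> {1..j}. f h k) = (\<Sum>h=1..i. \<Sum>k=1..j. f h k)"
    by (simp add: sum.cartesian_product)
  finally show ?thesis .
qed

lemma I_set_row_sum_le:
  assumes "a \<in> I_set p n m" and "i \<in> {1..p}"
  shows "(\<Sum>k=1..p. int (a i k)) \<le> int (n i)"
proof -
  have "int (a i p) \<le> int (n i) - (\<Sum>k=1..p-1. int (a i k))"
    using assms by (auto simp: I_set_def up_bd_def)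
  moreover have "p \<ge> 1"
    using assms(2) by simp
  ultimately show ?thesis
    using sum_atLeast1_atMost_last[of p "\<lambda>k. int (a i k)"] by linarith
qed

lemma I_set_col_sum_le:
  assumes "a \<in> I_set p n m" and "j \<in> {1..p}"
  shows "(\<Sum>h=1..p. int (a h j)) \<le> int (m j)"
proof -
  have "int (a p j) \<le> int (m j) - (\<Sum>h=1..p-1. int (a h j))"
    using assms by (auto simp: I_set_def up_bd_def)
  moreover have "p \<ge> 1"
    using assms(2) by simp
  ultimately show ?thesis
    using sum_atLeast1_atMost_last[of p "\<lambda>h. int (a h j)"] by linarith
qed

lemma I_set_total_ge:
  assumes "a \<in> I_set p n m" and "p \<ge> 1"
  shows "(\<Sum>h=1..p. int (n h)) \<le> (\<Sum>h=1..p. \<Sum>k=1..p. int (a h k))"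
proof -
  have "low_bd p n m a p p \<le> int (a p p)"
    using assms unfolding I_set_def by auto
  then show ?thesis
    unfolding low_bd_def sum_rectangle_minus_corner[OF assms(2) assms(2)] by simp
qed

lemma I_set_row_sum:
  assumes "a \<in> I_set p n m" and "i \<in> {1..p}"
  shows "(\<Sum>k=1..p. int (a i k)) = int (n i)"
proof -
  have "(\<Sum>h=1..p. int (n h)) \<le> (\<Sum>h=1..p. \<Sum>k=1..p. int (a h k))"
    using assms by (intro I_set_total_ge) auto
  moreover have "(\<Sum>h=1..p. \<Sum>k=1..p. int (a h k)) \<le> (\<Sum>h=1..p. int (n h))"
    by (intro sum_mono I_set_row_sum_le[OF assms(1)])
  ultimately have "(\<Sum>h=1..p. \<Sum>k=1..p. int (a h k)) = (\<Sum>h=1..p. int (n h))"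
    by simp
  from sum_mono_inv[OF this I_set_row_sum_le[OF assms(1)] assms(2)] show ?thesis
    by simp
qed

lemma I_set_col_sum:
  assumes "a \<in> I_set p n m" and "j \<in> {1..p}"
    and "(\<Sum>h=1..p. n h) = (\<Sum>h=1..p. m h)"
  shows "(\<Sum>h=1..p. int (a h j)) = int (m j)"
proof -
  have "(\<Sum>k=1..p. int (m k)) = (\<Sum>h=1..p. int (n h))"
    using assms(3) by (metis of_nat_sum)
  also have "\<dots> \<le> (\<Sum>h=1..p. \<Sum>k=1..p. int (a h k))"
    using assms by (intro I_set_total_ge) auto
  also have "\<dots> = (\<Sum>k=1..p. \<Sum>h=1..p. int (a h k))"
    by (rule sum.swap)
  finally have "(\<Sum>k=1..p. int (m k)) \<le> (\<Sum>k=1..p. \<Sum>h=1..p. int (a h k))" .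
  moreover have "(\<Sum>k=1..p. \<Sum>h=1..p. int (a h k)) \<le> (\<Sum>k=1..p. int (m k))"
    by (intro sum_mono I_set_col_sum_le[OF assms(1)])
  ultimately have "(\<Sum>k=1..p. \<Sum>h=1..p. int (a h k)) = (\<Sum>k=1..p. int (m k))"
    by simp
  from sum_mono_inv[OF this I_set_col_sum_le[OF assms(1)] assms(2)] show ?thesis
    by simp
qed

theorem propositionA3:
  fixes p :: nat and n m :: "nat \<Rightarrow> nat" and a :: "nat \<Rightarrow> nat \<Rightarrow> nat"
  assumes "p \<ge> 1"
    and "(\<Sum>h=1..p. n h) = (\<Sum>h=1..p. m h)"
    and "a \<in> I_set p n m"
  shows "(\<forall>i\<in>{1..p}. int (a i p) = int (n i) - (\<Sum>k=1..p-1. int (a i k)))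
       \<and> (\<forall>j\<in>{1..p}. int (a p j) = int (m j) - (\<Sum>h=1..p-1. int (a h j)))
       \<and> int (a p p) = int (n p) - (\<Sum>k=1..p-1. int (m k))
                       + (\<Sum>h=1..p-1. \<Sum>k=1..p-1. int (a h k))"
proof (intro conjI ballI)
  show last_col: "int (a i p) = int (n i) - (\<Sum>k=1..p-1. int (a i k))" if "i \<in> {1..p}" for i
    using I_set_row_sum[OF assms(3) that] sum_atLeast1_atMost_last[OF assms(1)]
    by (metis add_diff_cancel_left')
  show last_row: "int (a p j) = int (m j) - (\<Sum>h=1..p-1. int (a h j))" if "j \<in> {1..p}" for j
    using I_set_col_sum[OF assms(3) that assms(2)] sum_atLeast1_atMost_last[OF assms(1)]
    by (metis add_diff_cancel_left')
  have "int (a p p) = int (n p) - (\<Sum>k=1..p-1. int (a p k))"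
    using last_col assms(1) by simp
  also have "(\<Sum>k=1..p-1. int (a p k)) = (\<Sum>k=1..p-1. int (m k) - (\<Sum>h=1..p-1. int (a h k)))"
    using last_row by (intro sum.cong) auto
  also have "\<dots> = (\<Sum>k=1..p-1. int (m k)) - (\<Sum>h=1..p-1. \<Sum>k=1..p-1. int (a h k))"
    by (simp add: sum_subtractf) (rule sum.swap)
  finally show "int (a p p) = int (n p) - (\<Sum>k=1..p-1. int (m k))
                              + (\<Sum>h=1..p-1. \<Sum>k=1..p-1. int (a h k))"
    by simp
qed

end
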